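(* Let $(X,d,\mu)$ be a doubling metric measure space such that $(X,d)$ is connected and $L$-annularly connected for some $L\ge1$. Then $(X,d)$ satisfies a chain condition.
   Context: $\mu$ is doubling if every ball has positive finite measure and $\mu(B(x,2r))\le C_\mu\mu(B(x,r))$ for all $x\in X$, $r>0$. For $0<r<R$, $A(x,r,R)=\overline{B}(x,R)\setminus B(x,r)$. $X$ is $L$-annularly connected if whenever $y,z\in A(x,r,2r)$ for some $x\in X$, $r>0$, there is a curve joining $y$ and $z$ in $A(x,r/L,2rL)$. Chain condition: for every $\lambda\ge1$ there are constants $M\ge1$, $0<m\le1$ such that for each $x\in X$ and all $0<r<\operatorname{diam}(X)/8$ there is a sequence of balls $B_0,B_1,\dots$ with (1) $B_0\subset X\setminus B(x,r)$; (2) $M^{-1}\operatorname{diam}(B_i)\le\operatorname{dist}(x,B_i)\le M\operatorname{diam}(B_i)$; (3) $\operatorname{dist}(x,B_i)\le Mr2^{-mi}$; (4) there is a ball $D_i\subset B_i\cap B_{i+1}$ with $B_i\cup B_{i+1}\subset MD_i$, for all $i\ge0$; (5) no point of $X$ belongs to more than $M$ of the balls $\lambda B_i$ (where $\lambda B(y,s)=B(y,\lambda s)$). *)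

theory Defs
  imports "HOL-Analysis.Analysis"
begin

text \<open>The metric space X is the whole type 'a. Balls B(x,r) are open balls, r > 0.\<close>

definition doubling_measure :: "'a::metric_space measure \<Rightarrow> bool" where
  "doubling_measure \<mu> \<longleftrightarrow>
     sets \<mu> = sets borel \<and>
     (\<forall>x r. 0 < r \<longrightarrow> 0 < emeasure \<mu> (ball x r) \<and> emeasure \<mu> (ball x r) < \<infinity>) \<and>
     (\<exists>C::real. \<forall>x r. 0 < r \<longrightarrow>
        emeasure \<mu> (ball x (2 * r)) \<le> ennreal C * emeasure \<mu> (ball x r))"

definition annulus :: "'a::metric_space \<Rightarrow> real \<Rightarrow> real \<Rightarrow> 'a set" where
  "annulus x r R = cball x R - ball x r"

definition annularly_connected :: "real \<Rightarrow> 'a::metric_space itself \<Rightarrow> bool" where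
  "annularly_connected L (_::'a itself) \<longleftrightarrow>
     (\<forall>(x::'a) r y z. 0 < r \<longrightarrow> y \<in> annulus x r (2 * r) \<longrightarrow> z \<in> annulus x r (2 * r) \<longrightarrow>
        (\<exists>g. path g \<and> pathstart g = y \<and> pathfinish g = z \<and>
             path_image g \<subseteq> annulus x (r / L) (2 * r * L)))"

text \<open>Admissible radii: 0 < r < diam(X)/8, where diam(X) = \<infinity> if X is unbounded.\<close>
definition admissible_radius :: "'a::metric_space itself \<Rightarrow> real \<Rightarrow> bool" where
  "admissible_radius (_::'a itself) r \<longleftrightarrow>
     0 < r \<and> (bounded (UNIV::'a set) \<longrightarrow> r < diameter (UNIV::'a set) / 8)"

definition chain_condition :: "'a::metric_space itself \<Rightarrow> bool" where
  "chain_condition (T::'a itself) \<longleftrightarrow>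
     (\<forall>lam::real. 1 \<le> lam \<longrightarrow>
       (\<exists>M::real. \<exists>m::real. 1 \<le> M \<and> 0 < m \<and> m \<le> 1 \<and>
         (\<forall>(x::'a) r. admissible_radius T r \<longrightarrow>
           (\<exists>(c::nat \<Rightarrow> 'a) (s::nat \<Rightarrow> real).
              (\<forall>i. 0 < s i) \<and>
              ball (c 0) (s 0) \<subseteq> UNIV - ball x r \<and>
              (\<forall>i. diameter (ball (c i) (s i)) / M \<le> infdist x (ball (c i) (s i)) \<and>
                   infdist x (ball (c i) (s i)) \<le> M * diameter (ball (c i) (s i))) \<and>
              (\<forall>i. infdist x (ball (c i) (s i)) \<le> M * r * 2 powr (- m * real i)) \<and>
              (\<forall>i. \<exists>d t. 0 < t \<and>
                   ball d t \<subseteq> ball (c i) (s i) \<inter> ball (c (Suc i)) (s (Suc i)) \<and>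
                   ball (c i) (s i) \<union> ball (c (Suc i)) (s (Suc i)) \<subseteq> ball d (M * t)) \<and>
              (\<forall>p. finite {i. p \<in> ball (c i) (lam * s i)} \<and>
                   real (card {i. p \<in> ball (c i) (lam * s i)}) \<le> M)))))"

end

theory Submission
  imports Defs
begin

text \<open>Put rho_k = r / 2^k. By connectedness there are points y_k at distance 2 rho_k from x, and
  annular connectedness joins y_k to y_(k+1) by a path in the annulus A(x, rho_k/L, 2 rho_k L).
  Discretising the path and removing shortcuts gives an eps_k-chain, eps_k comparable to rho_k,
  whose non-adjacent points are eps_k-separated, so by the doubling property its length is bounded
  independently of x, r and k. Balls of radius comparable to rho_k centred at the chain points,
  listed scale by scale and padded to a common length N per scale, form the required chain:
  consecutive balls overlap substantially, their distance to x decays like 2^(-i/N) r, and a point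
  lies in enlarged balls of only boundedly many consecutive scales.\<close>

lemma connected_UNIV_dist_attains:
  fixes p q :: "'a::metric_space"
  assumes "connected (UNIV::'a set)" "0 \<le> t" "t \<le> dist p q"
  shows "\<exists>z. dist p z = t"
proof -
  have "connected (range (dist p))"
    by (rule connected_continuous_image[OF _ assms(1)]) (intro continuous_intros)
  then have "t \<in> range (dist p)"
    unfolding connected_iff_interval using assms(2,3) by (metis UNIV_I dist_self image_eqI)
  then show ?thesis by auto
qed

lemma diameter_ball_le:
  fixes c :: "'a::metric_space"
  assumes "0 < s"
  shows "diameter (ball c s) \<le> 2 * s"
proof -
  have "dist a b \<le> 2 * s" if "a \<in> ball c s" "b \<in> ball c s" for a b
    using that dist_triangle[of a b c] by (simp add: dist_commute)
  then show ?thesis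
    using assms by (auto simp: diameter_def intro!: cSUP_least)
qed

lemma diameter_ball_ge:
  fixes c :: "'a::metric_space"
  assumes "connected (UNIV::'a set)" "0 < s" "s \<le> dist c x"
  shows "s / 2 \<le> diameter (ball c s)"
proof -
  obtain z where z: "dist c z = s / 2"
    using connected_UNIV_dist_attains[OF assms(1), of "s/2" c x] assms by auto
  have "dist c z \<le> diameter (ball c s)"
    by (rule diameter_bounded_bound) (use z assms(2) in auto)
  then show ?thesis using z by simp
qed

lemma infdist_ball_ge:
  fixes c x :: "'a::metric_space"
  assumes "0 < s"
  shows "dist x c - s \<le> infdist x (ball c s)"
proof -
  have "dist x c - s \<le> (INF a\<in>ball c s. dist x a)"
    using assms by (intro cINF_greatest) (auto, smt (verit) dist_commute dist_triangle)
  then show ?thesis using assms by (simp add: infdist_def)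
qed

locale doubling_metric_measure =
  fixes \<mu> :: "'a::metric_space measure" and C :: real
  assumes sets_eq_borel: "sets \<mu> = sets borel"
    and one_le_C: "1 \<le> C"
    and emeasure_ball_pos: "0 < r \<Longrightarrow> 0 < emeasure \<mu> (ball x r)"
    and emeasure_ball_finite: "0 < r \<Longrightarrow> emeasure \<mu> (ball x r) < \<infinity>"
    and emeasure_ball_double: "0 < r \<Longrightarrow> emeasure \<mu> (ball x (2 * r)) \<le> ennreal C * emeasure \<mu> (ball x r)"

lemma doubling_measure_imp_doubling_metric_measure:
  assumes "doubling_measure \<mu>"
  obtains C where "doubling_metric_measure \<mu> C"
proof -
  obtain C0 :: real where C0: "\<And>x r. 0 < r \<Longrightarrow> emeasure \<mu> (ball x (2 * r)) \<le> ennreal C0 * emeasure \<mu> (ball x r)"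
    using assms unfolding doubling_measure_def by auto
  have "emeasure \<mu> (ball x (2 * r)) \<le> ennreal (max C0 1) * emeasure \<mu> (ball x r)" if "0 < r" for x :: 'a and r
    using C0[OF that, of x] by (rule order_trans) (intro mult_right_mono ennreal_leI, auto)
  then have "doubling_metric_measure \<mu> (max C0 1)"
    using assms unfolding doubling_measure_def doubling_metric_measure_def by auto
  then show ?thesis by (rule that)
qed

context doubling_metric_measure
begin

lemma emeasure_ball_power_two:
  assumes "0 < t"
  shows "emeasure \<mu> (ball q (2^n * t)) \<le> ennreal (C^n) * emeasure \<mu> (ball q t)"
proof (induction n)
  case 0
  then show ?case by simp
next
  case (Suc n)
  have "emeasure \<mu> (ball q (2^Suc n * t)) = emeasure \<mu> (ball q (2 * (2^n * t)))"
    by (simp add: mult.assoc)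
  also have "\<dots> \<le> ennreal C * emeasure \<mu> (ball q (2^n * t))"
    using assms by (simp add: emeasure_ball_double)
  also have "\<dots> \<le> ennreal C * (ennreal (C^n) * emeasure \<mu> (ball q t))"
    by (rule mult_left_mono[OF Suc]) simp
  also have "\<dots> = ennreal (C^Suc n) * emeasure \<mu> (ball q t)"
    using one_le_C by (simp add: ennreal_mult mult.assoc)
  finally show ?case .
qed

text \<open>The balls of radius e/2 around the points of S are disjoint, lie in B(x,2R), and each
  of them has measure at least C^(-n) times that of B(x,2R), since B(x,2R) is contained in a
  ball of radius 3R \<le> 2^n e/2 around any point of S.\<close>
lemma card_separated_le:
  fixes x :: 'a
  assumes S: "finite S" "S \<subseteq> cball x R" and e: "0 < e" "e \<le> R"
    and sep: "\<And>p q. p \<in> S \<Longrightarrow> q \<in> S \<Longrightarrow> p \<noteq> q \<Longrightarrow> e \<le> dist p q"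
    and n: "3 * R \<le> 2^n * (e/2)"
  shows "real (card S) \<le> C^n"
proof -
  have meas: "\<And>A. open A \<Longrightarrow> A \<in> sets \<mu>" using sets_eq_borel by auto
  have R: "0 < R" using e by linarith
  define A where "A = emeasure \<mu> (ball x (2*R))"
  have "0 < A" "A < \<infinity>"
    unfolding A_def using R emeasure_ball_pos emeasure_ball_finite by simp_all
  then obtain a where a: "A = ennreal a" "0 < a"
    by (cases A) auto
  have each: "A \<le> ennreal (C^n) * emeasure \<mu> (ball q (e/2))" if q: "q \<in> S" for q
  proof -
    have "dist x q \<le> R" using S q by auto
    then have "ball x (2 * R) \<subseteq> ball q (2^n * (e/2))"
      using n by (auto intro!: subsetI) (smt (verit) dist_commute dist_triangle)
    then have "A \<le> emeasure \<mu> (ball q (2^n * (e/2)))"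
      unfolding A_def by (rule emeasure_mono) (simp add: meas)
    also have "\<dots> \<le> ennreal (C^n) * emeasure \<mu> (ball q (e/2))"
      using e by (intro emeasure_ball_power_two) simp
    finally show ?thesis .
  qed
  have disj: "disjoint_family_on (\<lambda>q. ball q (e/2)) S"
    unfolding disjoint_family_on_def
  proof (intro ballI impI)
    fix p q assume pq: "p \<in> S" "q \<in> S" "p \<noteq> q"
    show "ball p (e/2) \<inter> ball q (e/2) = {}"
      using sep[OF pq] by (auto simp: disjoint_iff) (smt (verit) dist_commute dist_triangle)
  qed
  have union_le: "emeasure \<mu> (\<Union>q\<in>S. ball q (e/2)) \<le> A"
    unfolding A_def
  proof (rule emeasure_mono)
    show "(\<Union>q\<in>S. ball q (e/2)) \<subseteq> ball x (2*R)"
    proof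
      fix z assume "z \<in> (\<Union>q\<in>S. ball q (e/2))"
      then obtain q where q: "q \<in> S" "dist q z < e/2" by auto
      have "dist x q \<le> R" using S q by auto
      then show "z \<in> ball x (2*R)" using q e n dist_triangle[of x z q] by simp
    qed
  qed (simp add: meas)
  have "ennreal (real (card S)) * A = (\<Sum>q\<in>S. A)"
    by (simp add: ennreal_of_nat_eq_real_of_nat)
  also have "\<dots> \<le> ennreal (C^n) * (\<Sum>q\<in>S. emeasure \<mu> (ball q (e/2)))"
    unfolding sum_distrib_left by (intro sum_mono each)
  also have "\<dots> = ennreal (C^n) * emeasure \<mu> (\<Union>q\<in>S. ball q (e/2))"
    by (subst sum_emeasure[OF _ disj S(1)]) (auto simp: meas)
  also have "\<dots> \<le> ennreal (C^n) * A"
    by (rule mult_left_mono[OF union_le]) simp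
  finally have "ennreal (real (card S) * a) \<le> ennreal (C^n * a)"
    using a one_le_C by (simp add: ennreal_mult)
  then have "real (card S) * a \<le> C^n * a"
    using a one_le_C by (subst (asm) ennreal_le_iff) auto
  then show ?thesis using a by simp
qed

end

definition eps_chain :: "'a::metric_space set \<Rightarrow> real \<Rightarrow> 'a \<Rightarrow> 'a \<Rightarrow> nat \<Rightarrow> (nat \<Rightarrow> 'a) \<Rightarrow> bool" where
  "eps_chain K e y z n f \<longleftrightarrow>
     f 0 = y \<and> f n = z \<and> (\<forall>j\<le>n. f j \<in> K) \<and> (\<forall>j<n. dist (f j) (f (Suc j)) < e)"

lemma eps_chain_from_path:
  fixes g :: "real \<Rightarrow> 'a::metric_space"
  assumes "path g" "path_image g \<subseteq> K" "0 < e"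
  obtains n f where "eps_chain K e (pathstart g) (pathfinish g) n f"
proof -
  have "uniformly_continuous_on {0..1} g"
    using assms(1) unfolding path_def by (intro compact_uniformly_continuous) auto
  then obtain d where d: "0 < d"
    "\<And>s t. s \<in> {0..1} \<Longrightarrow> t \<in> {0..1} \<Longrightarrow> dist t s < d \<Longrightarrow> dist (g t) (g s) < e"
    unfolding uniformly_continuous_on_def using assms(3) by metis
  obtain N :: nat where N: "1 / d < real N" using reals_Archimedean2 by blast
  have N_pos: "0 < real N" using N d by (smt (verit) divide_pos_pos)
  define f where "f j = g (real j / real N)" for j
  have "eps_chain K e (pathstart g) (pathfinish g) N f"
    unfolding eps_chain_def
  proof (intro conjI allI impI)
    show "f 0 = pathstart g" by (simp add: f_def pathstart_def)
    show "f N = pathfinish g" using N_pos by (simp add: f_def pathfinish_def)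
    fix j
    show "f j \<in> K" if "j \<le> N"
      using that N_pos assms(2) unfolding f_def path_image_def by auto
    show "dist (f j) (f (Suc j)) < e" if j: "j < N"
    proof -
      have "dist (real (Suc j) / real N) (real j / real N) = 1 / real N"
        using N_pos by (simp add: dist_real_def field_simps)
      also have "\<dots> < d" using N d N_pos by (simp add: field_simps)
      finally show ?thesis
        using d(2)[of "real j / real N" "real (Suc j) / real N"] j N_pos
        by (simp add: f_def dist_commute)
    qed
  qed
  then show ?thesis by (rule that)
qed

lemma eps_chain_skip:
  assumes ch: "eps_chain K e y z n f" and ab: "a + 2 \<le> b" "b \<le> n" and d: "dist (f a) (f b) < e"
  shows "eps_chain K e y z (n - (b - a - 1)) (\<lambda>j. if j \<le> a then f j else f (j + (b - a - 1)))"
  using assms unfolding eps_chain_def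
proof (intro conjI allI impI)
  fix j
  assume c: "f 0 = y \<and> f n = z \<and> (\<forall>j\<le>n. f j \<in> K) \<and> (\<forall>j<n. dist (f j) (f (Suc j)) < e)"
    and j: "j < n - (b - a - 1)"
  consider "j < a" | "j = a" | "a < j" by linarith
  then show "dist (if j \<le> a then f j else f (j + (b - a - 1)))
          (if Suc j \<le> a then f (Suc j) else f (Suc j + (b - a - 1))) < e"
  proof cases
    case 3
    then show ?thesis using c ab j by auto
  qed (use c ab d in auto)
qed auto

text \<open>A chain of minimal length cannot be shortcut, so its non-adjacent points are e-separated.\<close>
lemma eps_chain_imp_separated:
  assumes "eps_chain K e y z n0 f0"
  obtains n f where "eps_chain K e y z n f" "\<And>a b. a + 2 \<le> b \<Longrightarrow> b \<le> n \<Longrightarrow> e \<le> dist (f a) (f b)"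
proof -
  define n where "n = (LEAST n. \<exists>f. eps_chain K e y z n f)"
  have "\<exists>f. eps_chain K e y z n f"
    unfolding n_def by (rule LeastI) (use assms in blast)
  then obtain f where f: "eps_chain K e y z n f" by blast
  have "e \<le> dist (f a) (f b)" if ab: "a + 2 \<le> b" "b \<le> n" for a b
  proof (rule ccontr)
    assume "\<not> e \<le> dist (f a) (f b)"
    then have "\<exists>f. eps_chain K e y z (n - (b - a - 1)) f"
      using eps_chain_skip[OF f ab] by (auto simp: not_le)
    then have "n \<le> n - (b - a - 1)"
      unfolding n_def by (rule Least_le)
    then show False using ab by simp
  qed
  then show ?thesis using f that by blast
qed

lemma (in doubling_metric_measure) separated_eps_chain_length_le:
  fixes x :: 'a
  assumes ch: "eps_chain K e y z n f"
    and sep: "\<And>a b. a + 2 \<le> b \<Longrightarrow> b \<le> n \<Longrightarrow> e \<le> dist (f a) (f b)"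
    and K: "K \<subseteq> cball x R" and e: "0 < e" "e \<le> R" and n0: "3 * R \<le> 2^n0 * (e/2)"
  shows "real n \<le> 2 * C^n0"
proof -
  define S where "S = (\<lambda>i. f (2*i)) ` {..n div 2}"
  have sep2: "e \<le> dist (f (2*i)) (f (2*i'))" if "i \<le> n div 2" "i' \<le> n div 2" "i \<noteq> i'" for i i'
    using that sep[of "2*i" "2*i'"] sep[of "2*i'" "2*i"] by (cases "i < i'") (auto simp: dist_commute)
  have "inj_on (\<lambda>i. f (2*i)) {..n div 2}"
    unfolding inj_on_def using sep2 e by fastforce
  then have "card S = n div 2 + 1" unfolding S_def by (simp add: card_image)
  moreover have "real (card S) \<le> C^n0"
  proof (rule card_separated_le[OF _ _ e _ n0])
    show "finite S" unfolding S_def by simp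
    show "S \<subseteq> cball x R" unfolding S_def using ch K unfolding eps_chain_def by auto
    show "\<And>p q. p \<in> S \<Longrightarrow> q \<in> S \<Longrightarrow> p \<noteq> q \<Longrightarrow> e \<le> dist p q"
      unfolding S_def using sep2 by auto
  qed
  ultimately show ?thesis by linarith
qed

lemma (in doubling_metric_measure) short_eps_chain_in_annulus:
  fixes x :: 'a
  assumes "annularly_connected L TYPE('a)" "1 \<le> L" "1 \<le> lam" "96 * lam * L^2 \<le> 2^n0" "0 < \<rho>"
    and "y \<in> annulus x \<rho> (2 * \<rho>)" "z \<in> annulus x \<rho> (2 * \<rho>)"
  obtains n f where "eps_chain (annulus x (\<rho> / L) (2 * \<rho> * L)) (\<rho> / (8 * lam * L)) y z n f"
    "real n \<le> 2 * C^n0"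
proof -
  define e where "e = \<rho> / (8 * lam * L)"
  have "0 < e" using assms(2,3,5) by (simp add: e_def)
  have "e \<le> 2 * \<rho> * L"
  proof -
    have "1 \<le> 8 * lam * L" using mult_mono[of 1 lam 1 L] assms(2,3) by simp
    then have "e \<le> \<rho> / 1"
      unfolding e_def using assms(2,3,5) by (intro divide_left_mono) auto
    also have "\<dots> \<le> 2 * \<rho> * L" using assms(2,5) by simp
    finally show ?thesis .
  qed
  have "3 * (2 * \<rho> * L) \<le> 2^n0 * (e / 2)"
    using mult_right_mono[OF assms(4), of \<rho>] assms(2,3,5)
    by (simp add: e_def field_simps power2_eq_square)
  obtain g where g: "path g" "pathstart g = y" "pathfinish g = z"
    "path_image g \<subseteq> annulus x (\<rho> / L) (2 * \<rho> * L)"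
    using assms unfolding annularly_connected_def by blast
  obtain n1 f1 where "eps_chain (annulus x (\<rho> / L) (2 * \<rho> * L)) e y z n1 f1"
    using eps_chain_from_path[OF g(1) g(4) \<open>0 < e\<close>] unfolding g(2,3) by blast
  then obtain n f where ch: "eps_chain (annulus x (\<rho> / L) (2 * \<rho> * L)) e y z n f"
    and sep: "\<And>a b. a + 2 \<le> b \<Longrightarrow> b \<le> n \<Longrightarrow> e \<le> dist (f a) (f b)"
    by (rule eps_chain_imp_separated) auto
  have "real n \<le> 2 * C^n0"
    by (rule separated_eps_chain_length_le[OF ch sep _ \<open>0 < e\<close> \<open>e \<le> _\<close> \<open>3 * _ \<le> _\<close>])
      (auto simp: annulus_def)
  with ch show ?thesis unfolding e_def by (rule that)
qed

lemma admissible_radius_far_point: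
  fixes x :: "'a::metric_space"
  assumes "admissible_radius TYPE('a) r"
  obtains w where "2 * r \<le> dist x w"
proof (cases "bounded (UNIV::'a set)")
  case True
  then have "8 * r < diameter (UNIV::'a set)" "0 < r"
    using assms by (simp_all add: admissible_radius_def)
  then obtain a b :: 'a where "8 * r < dist a b"
    using diameter_lower_bounded[OF True] by fastforce
  then have "2 * r \<le> dist x a \<or> 2 * r \<le> dist x b"
    using dist_triangle[of a b x] \<open>0 < r\<close> by (auto simp: dist_commute)
  then show ?thesis using that by blast
next
  case False
  then show ?thesis using that unfolding bounded_def by (meson nle_le)
qed

lemma dyadic_sphere_points:
  fixes x :: "'a::metric_space"
  assumes "connected (UNIV::'a set)" "admissible_radius TYPE('a) r"
  obtains y where "\<And>k. dist x (y k) = 2 * (r / 2^k)"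
proof -
  obtain w where w: "2 * r \<le> dist x w" using admissible_radius_far_point[OF assms(2)] .
  have "0 < r" using assms(2) by (simp add: admissible_radius_def)
  have "\<exists>z. dist x z = 2 * (r / 2^k)" for k :: nat
  proof (rule connected_UNIV_dist_attains[OF assms(1)])
    have "r / 2^k \<le> r" using \<open>0 < r\<close> by (simp add: divide_le_eq mult_le_cancel_left1)
    then show "2 * (r / 2^k) \<le> dist x w" using w by linarith
  qed (use \<open>0 < r\<close> in simp)
  then show ?thesis using that by metis
qed

definition linked_balls :: "real \<Rightarrow> 'a::metric_space \<Rightarrow> real \<Rightarrow> 'a \<Rightarrow> real \<Rightarrow> bool" where
  "linked_balls M c s c' s' \<longleftrightarrow>
     (\<exists>d t. 0 < t \<and> ball d t \<subseteq> ball c s \<inter> ball c' s' \<and> ball c s \<union> ball c' s' \<subseteq> ball d (M * t))"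

lemma linked_balls_mono:
  assumes "linked_balls M c s c' s'" "M \<le> M'"
  shows "linked_balls M' c s c' s'"
proof -
  obtain d t where "0 < t" "ball d t \<subseteq> ball c s \<inter> ball c' s'" "ball c s \<union> ball c' s' \<subseteq> ball d (M * t)"
    using assms(1) unfolding linked_balls_def by blast
  moreover have "ball d (M * t) \<subseteq> ball d (M' * t)"
    using assms(2) \<open>0 < t\<close> by (intro subset_ball mult_right_mono) auto
  ultimately show ?thesis unfolding linked_balls_def by blast
qed

lemma linked_balls_close:
  fixes c c' :: "'a::metric_space"
  assumes "dist c c' < s / 2"
  shows "linked_balls 3 c s c' s"
  unfolding linked_balls_def
proof (intro exI conjI)
  show s: "0 < s / 2" using assms zero_le_dist[of c c'] by linarith
  show "ball c (s / 2) \<subseteq> ball c s \<inter> ball c' s"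
  proof
    fix z assume "z \<in> ball c (s / 2)"
    then show "z \<in> ball c s \<inter> ball c' s"
      using assms s dist_triangle[of c' z c] by (auto simp: dist_commute)
  qed
  show "ball c s \<union> ball c' s \<subseteq> ball c (3 * (s / 2))"
  proof
    fix z assume "z \<in> ball c s \<union> ball c' s"
    then show "z \<in> ball c (3 * (s / 2))" using assms s dist_triangle[of c z c'] by auto
  qed
qed

lemma linked_balls_concentric:
  assumes "0 < t"
  shows "linked_balls 2 c (2 * t) c t"
  unfolding linked_balls_def using assms by (intro exI[of _ c] exI[of _ t]) auto

lemma card_le_if_div_spread_less:
  fixes I :: "nat set"
  assumes "0 < N" and spread: "\<And>i j. i \<in> I \<Longrightarrow> j \<in> I \<Longrightarrow> i div N \<le> j div N \<Longrightarrow> j div N < i div N + T"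
  shows "finite I \<and> card I \<le> T * N"
proof (cases "I = {}")
  case False
  define k where "k = (LEAST k. \<exists>i\<in>I. i div N = k)"
  have "\<exists>i\<in>I. i div N = k"
    unfolding k_def by (rule LeastI_ex) (use False in auto)
  then obtain i0 where i0: "i0 \<in> I" "i0 div N = k" by blast
  have "I \<subseteq> {k * N ..< k * N + T * N}"
  proof
    fix i assume i: "i \<in> I"
    have "k \<le> i div N" unfolding k_def by (rule Least_le) (use i in auto)
    moreover have "i div N < k + T" using spread[OF i0(1) i] calculation i0(2) by simp
    ultimately have "k * N \<le> i div N * N" "(i div N + 1) * N \<le> (k + T) * N"
      by (intro mult_right_mono; simp)+
    moreover have "i = i div N * N + i mod N" "i mod N < N"
      using \<open>0 < N\<close> by simp_all
    ultimately show "i \<in> {k * N ..< k * N + T * N}"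
      unfolding atLeastLessThan_iff add_mult_distrib by linarith
  qed
  then show ?thesis using card_mono[of "{k * N ..< k * N + T * N}" I] finite_subset by auto
qed simp

locale dyadic_annular_chains =
  fixes x :: "'a::metric_space" and r L lam :: real and N :: nat
    and y :: "nat \<Rightarrow> 'a" and nn :: "nat \<Rightarrow> nat" and f :: "nat \<Rightarrow> nat \<Rightarrow> 'a"
  assumes r_pos: "0 < r" and one_le_L: "1 \<le> L" and one_le_lam: "1 \<le> lam"
    and nn_less: "nn k < N"
    and dist_start: "dist x (y 0) = 2 * r"
    and chain: "eps_chain (annulus x (r / 2^k / L) (2 * (r / 2^k) * L)) (r / 2^k / (8 * lam * L))
                  (y k) (y (Suc k)) (nn k) (f k)"
begin

abbreviation scale :: "nat \<Rightarrow> real" where "scale k \<equiv> r / 2^k"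

text \<open>The i-th ball sits on the chain of scale k = i div N, which is padded by repeating its
  end point so that every scale contributes exactly N balls.\<close>
definition centre :: "nat \<Rightarrow> 'a" where
  "centre i = f (i div N) (min (i mod N) (nn (i div N)))"

definition radius :: "nat \<Rightarrow> real" where
  "radius i = scale (i div N) / (4 * lam * L)"

lemma N_pos: "0 < N"
  using nn_less[of 0] by simp

lemma radius_pos: "0 < radius i"
  using r_pos one_le_L one_le_lam by (simp add: radius_def)

lemma radius_le: "4 * radius i \<le> scale (i div N) / L"
proof -
  have "scale (i div N) / (lam * L) \<le> scale (i div N) / L"
    using r_pos one_le_L one_le_lam by (intro divide_left_mono) auto
  then show ?thesis by (simp add: radius_def)
qed

lemma centre_in_annulus:
  "scale (i div N) / L \<le> dist x (centre i)" "dist x (centre i) \<le> 2 * scale (i div N) * L"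
  using chain[of "i div N"] unfolding centre_def eps_chain_def annulus_def by (auto simp: not_less)

lemma first_ball_outside: "ball (centre 0) (radius 0) \<subseteq> UNIV - ball x r"
proof -
  have "centre 0 = y 0" using chain[of 0] by (simp add: centre_def eps_chain_def)
  moreover have "4 * radius 0 \<le> r"
  proof -
    have "r / L \<le> r" using one_le_L r_pos by (simp add: divide_le_eq)
    then show ?thesis using radius_le[of 0] by simp
  qed
  show ?thesis
  proof
    fix z assume "z \<in> ball (centre 0) (radius 0)"
    moreover have "dist x (y 0) \<le> dist x z + dist z (y 0)" by (rule dist_triangle)
    ultimately show "z \<in> UNIV - ball x r"
      using dist_start \<open>centre 0 = y 0\<close> \<open>4 * radius 0 \<le> r\<close> radius_pos[of 0]
      by (simp add: dist_commute)
  qed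
qed

lemma diameter_le_infdist:
  "diameter (ball (centre i) (radius i)) \<le> infdist x (ball (centre i) (radius i))"
  using diameter_ball_le[OF radius_pos, of "centre i" i] infdist_ball_ge[OF radius_pos, of x "centre i" i]
    centre_in_annulus(1)[of i] radius_le[of i] radius_pos[of i] by linarith

lemma infdist_le_diameter:
  assumes "connected (UNIV::'a set)"
  shows "infdist x (ball (centre i) (radius i)) \<le> 16 * lam * L^2 * diameter (ball (centre i) (radius i))"
proof -
  have "radius i \<le> dist (centre i) x"
    using centre_in_annulus(1)[of i] radius_le[of i] radius_pos[of i] by (simp add: dist_commute)
  then have diam: "radius i / 2 \<le> diameter (ball (centre i) (radius i))"
    by (rule diameter_ball_ge[OF assms radius_pos])
  have "infdist x (ball (centre i) (radius i)) \<le> dist x (centre i)"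
    using radius_pos by (intro infdist_le) simp
  also have "\<dots> \<le> 2 * scale (i div N) * L" by (rule centre_in_annulus)
  also have "\<dots> = 16 * lam * L^2 * (radius i / 2)"
    using one_le_L one_le_lam by (simp add: radius_def power2_eq_square field_simps)
  also have "\<dots> \<le> 16 * lam * L^2 * diameter (ball (centre i) (radius i))"
    using diam one_le_lam by (intro mult_left_mono) auto
  finally show ?thesis .
qed

lemma infdist_le_power:
  "infdist x (ball (centre i) (radius i)) \<le> 4 * L * r * 2 powr (- (1 / real N) * real i)"
proof -
  define k where "k = i div N"
  have "i \<le> Suc k * N"
    using dividend_less_div_times[OF N_pos, of i] unfolding k_def by simp
  then have "real i \<le> real (Suc k) * real N"
    by (metis of_nat_le_iff of_nat_mult)
  then have "real i / real N \<le> real (Suc k)"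
    using N_pos by (simp add: divide_le_eq)
  then have mono: "2 powr (- real (Suc k)) \<le> 2 powr (- (1 / real N) * real i)"
    by (intro powr_mono) auto
  have "2 powr (- real (Suc k)) = 1 / 2^Suc k"
    by (simp only: powr_minus_divide powr_realpow[OF zero_less_numeral])
  with mono have "1 / 2^Suc k \<le> 2 powr (- (1 / real N) * real i)"
    by (simp only:)
  have "infdist x (ball (centre i) (radius i)) \<le> dist x (centre i)"
    using radius_pos by (intro infdist_le) simp
  also have "\<dots> \<le> 4 * L * r * (1 / 2^Suc k)"
    using centre_in_annulus(2)[of i] by (simp add: k_def mult_ac)
  also have "\<dots> \<le> 4 * L * r * 2 powr (- (1 / real N) * real i)"
    using \<open>1 / 2^Suc k \<le> _\<close> one_le_L r_pos by (intro mult_left_mono) auto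
  finally show ?thesis .
qed

lemma linked_consecutive: "linked_balls 3 (centre i) (radius i) (centre (Suc i)) (radius (Suc i))"
proof (cases "Suc (i mod N) = N")
  case True
  define k where "k = i div N"
  have "Suc i div N = Suc k" "Suc i mod N = 0"
    using True N_pos by (auto simp: k_def div_Suc mod_Suc)
  then have "centre (Suc i) = y (Suc k)" "radius i = 2 * radius (Suc i)"
    using chain[of "Suc k"] by (simp_all add: centre_def radius_def eps_chain_def k_def)
  moreover have "centre i = y (Suc k)"
    using True chain[of k] nn_less[of k] by (simp add: centre_def eps_chain_def k_def min_absorb2)
  ultimately show ?thesis
    using linked_balls_mono[OF linked_balls_concentric[OF radius_pos[of "Suc i"]], of 3] by simp
next
  case False
  define k where "k = i div N"
  define j where "j = i mod N"
  have "Suc i div N = k" "Suc i mod N = Suc j"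
    using False N_pos by (auto simp: k_def j_def div_Suc mod_Suc)
  then have centres: "centre i = f k (min j (nn k))" "centre (Suc i) = f k (min (Suc j) (nn k))"
    and radii: "radius (Suc i) = radius i" "radius i / 2 = scale k / (8 * lam * L)"
    by (simp_all add: centre_def radius_def k_def j_def)
  have "dist (centre i) (centre (Suc i)) < radius i / 2"
    using chain[of k] r_pos one_le_L one_le_lam unfolding centres radii(2)
    by (cases "j < nn k") (auto simp: eps_chain_def)
  then show ?thesis
    unfolding radii(1) by (rule linked_balls_close)
qed

end

context dyadic_annular_chains
begin

lemma scale_bounds_if_mem_enlarged_ball:
  assumes "p \<in> ball (centre i) (lam * radius i)"
  shows "3 * scale (i div N) < 4 * L * dist x p" "dist x p < 3 * scale (i div N) * L"
proof -
  define s where "s = scale (i div N)"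
  have "0 < s" using r_pos by (simp add: s_def)
  then have s: "0 < s" "s \<le> s * L" using one_le_L by simp_all
  have "lam * radius i = s / L / 4"
    using one_le_lam by (simp add: radius_def s_def field_simps)
  then have near: "dist (centre i) p < s / L / 4" using assms by simp
  have "s / L \<le> s" using s one_le_L by (simp add: divide_le_eq)
  have "s / L \<le> dist x (centre i)" "dist x (centre i) \<le> 2 * s * L"
    using centre_in_annulus[of i] by (simp_all add: s_def)
  moreover have "dist x (centre i) \<le> dist x p + dist (centre i) p"
    using dist_triangle[of x "centre i" p] by (simp add: dist_commute)
  moreover have "dist x p \<le> dist x (centre i) + dist (centre i) p"
    by (rule dist_triangle)
  ultimately have "3 * (s / L) < 4 * dist x p" "dist x p < 3 * (s * L)"
    using near \<open>s / L \<le> s\<close> s by simp_all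
  then show "3 * s < 4 * L * dist x p" "dist x p < 3 * s * L"
    using one_le_L by (simp_all add: field_simps)
qed

lemma card_enlarged_balls_containing_le:
  assumes "4 * L^2 \<le> 2^T"
  shows "finite {i. p \<in> ball (centre i) (lam * radius i)} \<and>
         card {i. p \<in> ball (centre i) (lam * radius i)} \<le> T * N"
proof (rule card_le_if_div_spread_less[OF N_pos])
  fix i j assume i: "i \<in> {i. p \<in> ball (centre i) (lam * radius i)}"
    and j: "j \<in> {i. p \<in> ball (centre i) (lam * radius i)}" and ij: "i div N \<le> j div N"
  define d where "d = j div N - i div N"
  define s where "s = scale (j div N)"
  have "scale (i div N) = 2^d * s"
    using ij by (simp add: d_def s_def power_diff)
  then have "3 * (2^d * s) < 4 * L * dist x p"
    using scale_bounds_if_mem_enlarged_ball(1)[of p i] i by simp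
  also have "\<dots> < 4 * L * (3 * s * L)"
    using scale_bounds_if_mem_enlarged_ball(2)[of p j] j one_le_L
    by (intro mult_strict_left_mono) (auto simp: s_def)
  finally have "(2::real)^d * s < 4 * L^2 * s"
    by (simp add: power2_eq_square algebra_simps)
  moreover have "0 < s" using r_pos by (simp add: s_def)
  ultimately have "(2::real)^d < 4 * L^2"
    by (simp only: mult_less_cancel_right_pos)
  then have "(2::real)^d < 2^T"
    using assms by linarith
  then have "d < T"
    by simp
  then show "j div N < i div N + T"
    using ij by (simp add: d_def)
qed

end

definition balls_chain :: "real \<Rightarrow> real \<Rightarrow> real \<Rightarrow> 'a::metric_space \<Rightarrow> real \<Rightarrow> (nat \<Rightarrow> 'a) \<Rightarrow> (nat \<Rightarrow> real) \<Rightarrow> bool" where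
  "balls_chain lam M m x r c s \<longleftrightarrow>
     (\<forall>i. 0 < s i) \<and>
     ball (c 0) (s 0) \<subseteq> UNIV - ball x r \<and>
     (\<forall>i. diameter (ball (c i) (s i)) / M \<le> infdist x (ball (c i) (s i)) \<and>
          infdist x (ball (c i) (s i)) \<le> M * diameter (ball (c i) (s i))) \<and>
     (\<forall>i. infdist x (ball (c i) (s i)) \<le> M * r * 2 powr (- m * real i)) \<and>
     (\<forall>i. linked_balls M (c i) (s i) (c (Suc i)) (s (Suc i))) \<and>
     (\<forall>p. finite {i. p \<in> ball (c i) (lam * s i)} \<and> real (card {i. p \<in> ball (c i) (lam * s i)}) \<le> M)"

lemma chain_condition_iff_balls_chain:
  "chain_condition TYPE('a::metric_space) \<longleftrightarrow>
     (\<forall>lam \<ge> 1. \<exists>M m. 1 \<le> M \<and> 0 < m \<and> m \<le> 1 \<and>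
        (\<forall>(x::'a) r. admissible_radius TYPE('a) r \<longrightarrow> (\<exists>c s. balls_chain lam M m x r c s)))"
  unfolding chain_condition_def balls_chain_def linked_balls_def by simp

lemma (in dyadic_annular_chains) balls_chain:
  assumes "connected (UNIV::'a set)" "4 * L^2 \<le> 2^T"
    and M: "16 * lam * L^2 \<le> M" "real (T * N) \<le> M"
  shows "balls_chain lam M (1 / real N) x r centre radius"
proof -
  have "L \<le> L^2" "L^2 \<le> lam * L^2"
    using one_le_L one_le_lam by (simp_all add: power2_eq_square mult_le_cancel_left1)
  then have "3 \<le> M" "4 * L \<le> M"
    using M one_le_L by linarith+
  have diam_nonneg: "0 \<le> diameter (ball (centre i) (radius i))" for i
    by (simp add: diameter_ge_0)
  have diam_le: "diameter (ball (centre i) (radius i)) / M \<le> infdist x (ball (centre i) (radius i))" for i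
  proof -
    have "diameter (ball (centre i) (radius i)) / M \<le> diameter (ball (centre i) (radius i))"
      using diam_nonneg[of i] \<open>3 \<le> M\<close> by (simp add: divide_le_eq mult_le_cancel_left1)
    then show ?thesis using diameter_le_infdist[of i] by linarith
  qed
  have le_diam: "infdist x (ball (centre i) (radius i)) \<le> M * diameter (ball (centre i) (radius i))" for i
    using infdist_le_diameter[OF assms(1), of i] mult_right_mono[OF M(1) diam_nonneg[of i]] by linarith
  have decay: "infdist x (ball (centre i) (radius i)) \<le> M * r * 2 powr (- (1 / real N) * real i)" for i
  proof -
    have "4 * L * r * 2 powr (- (1 / real N) * real i) \<le> M * r * 2 powr (- (1 / real N) * real i)"
      using \<open>4 * L \<le> M\<close> r_pos by (intro mult_right_mono) auto
    then show ?thesis using infdist_le_power[of i] by linarith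
  qed
  have linked: "linked_balls M (centre i) (radius i) (centre (Suc i)) (radius (Suc i))" for i
    using linked_balls_mono[OF linked_consecutive \<open>3 \<le> M\<close>] .
  have card_le: "real (card {i. p \<in> ball (centre i) (lam * radius i)}) \<le> M" for p
  proof -
    have "card {i. p \<in> ball (centre i) (lam * radius i)} \<le> T * N"
      using card_enlarged_balls_containing_le[OF assms(2)] by blast
    then show ?thesis using M(2) by (meson of_nat_le_iff order_trans)
  qed
  show ?thesis
    unfolding balls_chain_def
    using radius_pos first_ball_outside diam_le le_diam decay linked card_le
      card_enlarged_balls_containing_le[OF assms(2)] by blast
qed

lemma (in doubling_metric_measure) dyadic_annular_chains_exist:
  assumes "connected (UNIV::'a set)" "annularly_connected L TYPE('a)" "1 \<le> L" "1 \<le> lam"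
  obtains N where "0 < N"
    "\<And>(x::'a) r. admissible_radius TYPE('a) r \<Longrightarrow> \<exists>y nn f. dyadic_annular_chains x r L lam N y nn f"
proof -
  obtain n0 :: nat where n0: "96 * lam * L^2 \<le> 2^n0"
    using real_arch_pow[of 2 "96 * lam * L^2"] by (auto intro: less_imp_le)
  define N where "N = nat \<lceil>2 * C^n0\<rceil> + 1"
  have "\<exists>y nn f. dyadic_annular_chains x r L lam N y nn f"
    if r: "admissible_radius TYPE('a) r" for x :: 'a and r
  proof -
    have "0 < r" using r by (simp add: admissible_radius_def)
    obtain y where y: "\<And>k. dist x (y k) = 2 * (r / 2^k)"
      using dyadic_sphere_points[OF assms(1) r] by blast
    define A where "A k = annulus x (r / 2^k / L) (2 * (r / 2^k) * L)" for k :: nat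
    define e where "e k = r / 2^k / (8 * lam * L)" for k :: nat
    have "\<exists>n g. eps_chain (A k) (e k) (y k) (y (Suc k)) n g \<and> n < N" for k
    proof -
      have pos: "0 < r / 2^k" and "dist x (y (Suc k)) = r / 2^k"
        using y[of "Suc k"] \<open>0 < r\<close> by simp_all
      then have "y k \<in> annulus x (r / 2^k) (2 * (r / 2^k))" "y (Suc k) \<in> annulus x (r / 2^k) (2 * (r / 2^k))"
        using y[of k] by (simp_all add: annulus_def)
      then obtain n g where "eps_chain (A k) (e k) (y k) (y (Suc k)) n g" "real n \<le> 2 * C^n0"
        unfolding A_def e_def by (rule short_eps_chain_in_annulus[OF assms(2,3,4) n0 pos])
      moreover have "2 * C^n0 \<le> real (nat \<lceil>2 * C^n0\<rceil>)" by (rule real_nat_ceiling_ge)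
      ultimately have "n < N" unfolding N_def by linarith
      with \<open>eps_chain (A k) (e k) (y k) (y (Suc k)) n g\<close> show ?thesis by blast
    qed
    then obtain nn where "\<forall>k. \<exists>g. eps_chain (A k) (e k) (y k) (y (Suc k)) (nn k) g \<and> nn k < N"
      by (metis choice)
    then have "\<forall>k. nn k < N" "\<forall>k. \<exists>g. eps_chain (A k) (e k) (y k) (y (Suc k)) (nn k) g"
      by auto
    moreover from this(2) obtain f where "\<forall>k. eps_chain (A k) (e k) (y k) (y (Suc k)) (nn k) (f k)"
      by (auto dest!: choice)
    ultimately have "dyadic_annular_chains x r L lam N y nn f"
      using \<open>0 < r\<close> assms(3,4) y[of 0] unfolding A_def e_def by unfold_locales auto
    then show ?thesis by blast
  qed
  moreover have "0 < N" by (simp add: N_def)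
  ultimately show ?thesis using that by blast
qed

theorem lemma3p3:
  fixes \<mu> :: "'a::metric_space measure" and L :: real
  assumes "doubling_measure \<mu>"
    and "connected (UNIV::'a set)"
    and "1 \<le> L"
    and "annularly_connected L TYPE('a)"
  shows "chain_condition TYPE('a)"
proof -
  obtain C where "doubling_metric_measure \<mu> C"
    using assms(1) by (rule doubling_measure_imp_doubling_metric_measure)
  then interpret doubling_metric_measure \<mu> C .
  show ?thesis unfolding chain_condition_iff_balls_chain
  proof (intro allI impI)
    fix lam :: real assume lam: "1 \<le> lam"
    obtain N where N: "0 < N"
      and chains: "\<And>(x::'a) r. admissible_radius TYPE('a) r \<Longrightarrow> \<exists>y nn f. dyadic_annular_chains x r L lam N y nn f"
      using dyadic_annular_chains_exist[OF assms(2,4,3) lam] by blast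
    obtain T :: nat where T: "4 * L^2 \<le> 2^T"
      using real_arch_pow[of 2 "4 * L^2"] by (auto intro: less_imp_le)
    define M where "M = real (T * N) + 16 * lam * L^2"
    have M: "16 * lam * L^2 \<le> M" "real (T * N) \<le> M"
      using lam by (simp_all add: M_def)
    have "1 \<le> L^2" "1 * L^2 \<le> lam * L^2"
      using assms(3) lam by (simp_all add: one_le_power mult_right_mono)
    with M(1) have "1 \<le> M" by linarith
    have "\<exists>c s. balls_chain lam M (1 / real N) x r c s"
      if "admissible_radius TYPE('a) r" for x :: 'a and r
      using chains[OF that] dyadic_annular_chains.balls_chain[OF _ assms(2) T M(1,2)] by blast
    then show "\<exists>M m. 1 \<le> M \<and> 0 < m \<and> m \<le> 1 \<and>
        (\<forall>(x::'a) r. admissible_radius TYPE('a) r \<longrightarrow> (\<exists>c s. balls_chain lam M m x r c s))"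
      using \<open>1 \<le> M\<close> N by (intro exI[of _ M] exI[of _ "1 / real N"]) auto
  qed
qed

end
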